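(* Let $G$ be a finite group with $Z(G)=I$, $(C_1,\dots,C_m)$ a class vector of $G$ with $m\ge 6$, and $3\le n\le m-3$. Then $$l^i(C_1,\dots,C_m)\ \ge\ |G|\cdot l^i(C_1,\dots,C_n)\cdot l^i(C_{n+1},\dots,C_m).$$
   Context: $I$ is the trivial group and $\iota$ the identity. A class vector is a tuple of non-trivial conjugacy classes. $\Sigma^i(C_1,\dots,C_k)$ is the set of $G$-conjugacy classes (simultaneous conjugation) of tuples $(\sigma_1,\dots,\sigma_k)$ with $\sigma_j\in C_j$, $\langle\sigma_1,\dots,\sigma_k\rangle=G$, $\sigma_1\cdots\sigma_k=\iota$, and $l^i(C_1,\dots,C_k)=|\Sigma^i(C_1,\dots,C_k)|$. *)

theory Defs
  imports "HOL-Algebra.Algebra"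
begin

definition group_center :: "('a, 'b) monoid_scheme \<Rightarrow> 'a set" where
  "group_center G = {z \<in> carrier G. \<forall>g \<in> carrier G. z \<otimes>\<^bsub>G\<^esub> g = g \<otimes>\<^bsub>G\<^esub> z}"

definition conj_by :: "('a, 'b) monoid_scheme \<Rightarrow> 'a \<Rightarrow> 'a \<Rightarrow> 'a" where
  "conj_by G g x = g \<otimes>\<^bsub>G\<^esub> x \<otimes>\<^bsub>G\<^esub> inv\<^bsub>G\<^esub> g"

definition conj_class :: "('a, 'b) monoid_scheme \<Rightarrow> 'a \<Rightarrow> 'a set" where
  "conj_class G x = {conj_by G g x | g. g \<in> carrier G}"

definition conj_classes :: "('a, 'b) monoid_scheme \<Rightarrow> 'a set set" where
  "conj_classes G = {conj_class G x | x. x \<in> carrier G}"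

definition class_vector :: "('a, 'b) monoid_scheme \<Rightarrow> 'a set list \<Rightarrow> bool" where
  "class_vector G Cs \<longleftrightarrow> (\<forall>C \<in> set Cs. C \<in> conj_classes G \<and> C \<noteq> {\<one>\<^bsub>G\<^esub>})"

definition tuple_prod :: "('a, 'b) monoid_scheme \<Rightarrow> 'a list \<Rightarrow> 'a" where
  "tuple_prod G xs = foldr (\<lambda>x y. x \<otimes>\<^bsub>G\<^esub> y) xs \<one>\<^bsub>G\<^esub>"

definition gen_tuples :: "('a, 'b) monoid_scheme \<Rightarrow> 'a set list \<Rightarrow> 'a list set" where
  "gen_tuples G Cs = {xs. list_all2 (\<lambda>x C. x \<in> C) xs Cs
                        \<and> generate G (set xs) = carrier G
                        \<and> tuple_prod G xs = \<one>\<^bsub>G\<^esub>}"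

definition sim_conj_orbit :: "('a, 'b) monoid_scheme \<Rightarrow> 'a list \<Rightarrow> 'a list set" where
  "sim_conj_orbit G xs = {map (conj_by G g) xs | g. g \<in> carrier G}"

definition Sigma_i :: "('a, 'b) monoid_scheme \<Rightarrow> 'a set list \<Rightarrow> 'a list set set" where
  "Sigma_i G Cs = sim_conj_orbit G ` gen_tuples G Cs"

definition l_i :: "('a, 'b) monoid_scheme \<Rightarrow> 'a set list \<Rightarrow> nat" where
  "l_i G Cs = card (Sigma_i G Cs)"

end

theory Submission
  imports Defs
begin

text \<open>
  Concatenation maps a pair of generating tuples with product \<iota> in \<open>(C\<^sub>1, \<dots>, C\<^sub>n)\<close> and in
  \<open>(C\<^sub>n\<^sub>+\<^sub>1, \<dots>, C\<^sub>m)\<close> injectively to such a tuple in \<open>(C\<^sub>1, \<dots>, C\<^sub>m)\<close>: the first half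
  already generates \<open>G\<close>, and the products multiply to \<iota>. The stabiliser of a generating tuple under
  simultaneous conjugation is the centre, so when \<open>Z(G) = I\<close> every orbit has exactly \<open>|G|\<close>
  elements and the number of such tuples in a class vector is \<open>|G| \<cdot> l\<^sup>i\<close>. Comparing counts gives
  \<open>|G| l\<^sup>i(C\<^sub>1, \<dots>, C\<^sub>n) \<cdot> |G| l\<^sup>i(C\<^sub>n\<^sub>+\<^sub>1, \<dots>, C\<^sub>m) \<le> |G| l\<^sup>i(C\<^sub>1, \<dots>, C\<^sub>m)\<close>.
\<close>

lemma class_vector_append [simp]:
  "class_vector G (Cs @ Ds) \<longleftrightarrow> class_vector G Cs \<and> class_vector G Ds"
  unfolding class_vector_def by auto

context group
begin

lemma group_actionI:
  assumes closed: "\<And>g x. g \<in> carrier G \<Longrightarrow> x \<in> E \<Longrightarrow> f g x \<in> E"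
    and one: "\<And>x. x \<in> E \<Longrightarrow> f \<one> x = x"
    and compat: "\<And>g h x. g \<in> carrier G \<Longrightarrow> h \<in> carrier G \<Longrightarrow> x \<in> E \<Longrightarrow>
                   f (g \<otimes> h) x = f g (f h x)"
  shows "group_action G E (\<lambda>g. \<lambda>x \<in> E. f g x)"
proof -
  have Bij: "(\<lambda>x \<in> E. f g x) \<in> Bij E" if g: "g \<in> carrier G" for g
  proof -
    have "bij_betw (f g) E E"
    proof (rule bij_betw_byWitness)
      show "\<forall>x\<in>E. f (inv g) (f g x) = x" "\<forall>x\<in>E. f g (f (inv g) x) = x"
        using g by (simp_all flip: compat add: one)
      show "f g ` E \<subseteq> E" "f (inv g) ` E \<subseteq> E"
        using g closed by auto
    qed
    then show ?thesis
      by (simp add: Bij_def)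
  qed
  have "(\<lambda>g. \<lambda>x \<in> E. f g x) \<in> hom G (BijGroup E)"
  proof (rule homI)
    show "(\<lambda>x \<in> E. f g x) \<in> carrier (BijGroup E)" if "g \<in> carrier G" for g
      using Bij[OF that] unfolding BijGroup_def by simp
    show "(\<lambda>x \<in> E. f (g \<otimes> h) x) = (\<lambda>x \<in> E. f g x) \<otimes>\<^bsub>BijGroup E\<^esub> (\<lambda>x \<in> E. f h x)"
      if "g \<in> carrier G" "h \<in> carrier G" for g h
      using that Bij closed unfolding BijGroup_def
      by (auto simp: compose_def compat intro!: restrict_ext)
  qed
  then show ?thesis
    by (simp add: group_action_def group_hom_def group_hom_axioms_def group_BijGroup)
qed

lemma commutes_with_generate:
  assumes "z \<in> carrier G" and "S \<subseteq> carrier G" and "\<And>x. x \<in> S \<Longrightarrow> z \<otimes> x = x \<otimes> z"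
    and "y \<in> generate G S"
  shows "z \<otimes> y = y \<otimes> z"
  using assms(4)
proof (induction rule: generate.induct)
  case one
  then show ?case using assms(1) by simp
next
  case (incl h)
  then show ?case using assms(3) by blast
next
  case (inv h)
  have h: "h \<in> carrier G" and zh: "z \<otimes> h = h \<otimes> z"
    using inv assms(2,3) by blast+
  have "z \<otimes> inv h = inv h \<otimes> (h \<otimes> z) \<otimes> inv h"
    using h assms(1) by (simp add: m_assoc[symmetric])
  also have "\<dots> = inv h \<otimes> z"
    using h assms(1) by (simp flip: zh add: m_assoc)
  finally show ?case by simp
next
  case (eng h1 h2)
  have "h1 \<in> carrier G" "h2 \<in> carrier G"
    using eng.hyps generate_incl[OF assms(2)] by blast+
  then show ?case using eng.IH assms(1) by (metis m_assoc)
qed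

lemma conj_by_closed [intro, simp]:
  "g \<in> carrier G \<Longrightarrow> x \<in> carrier G \<Longrightarrow> conj_by G g x \<in> carrier G"
  unfolding conj_by_def by simp

lemma conj_by_one [simp]: "x \<in> carrier G \<Longrightarrow> conj_by G \<one> x = x"
  unfolding conj_by_def by simp

lemma conj_by_mult:
  "g \<in> carrier G \<Longrightarrow> h \<in> carrier G \<Longrightarrow> x \<in> carrier G \<Longrightarrow>
   conj_by G (g \<otimes> h) x = conj_by G g (conj_by G h x)"
  unfolding conj_by_def by (simp add: m_assoc inv_mult_group)

lemma conj_by_eq_iff_commute:
  "g \<in> carrier G \<Longrightarrow> x \<in> carrier G \<Longrightarrow> conj_by G g x = x \<longleftrightarrow> g \<otimes> x = x \<otimes> g"
  unfolding conj_by_def by (metis inv_solve_right' m_closed)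

lemma group_hom_conj_by:
  assumes g: "g \<in> carrier G"
  shows "group_hom G G (conj_by G g)"
proof -
  have "conj_by G g (x \<otimes> y) = conj_by G g x \<otimes> conj_by G g y"
    if "x \<in> carrier G" "y \<in> carrier G" for x y
    using g that unfolding conj_by_def by (simp add: m_assoc flip: m_assoc[of "inv g" g])
  then show ?thesis
    using g by (intro group_hom.intro group_hom_axioms.intro homI is_group) auto
qed

lemma conj_by_image_carrier:
  assumes g: "g \<in> carrier G"
  shows "conj_by G g ` carrier G = carrier G"
proof -
  have "x \<in> conj_by G g ` carrier G" if x: "x \<in> carrier G" for x
  proof -
    have "x = conj_by G g (conj_by G (inv g) x)"
      using g x by (simp flip: conj_by_mult)
    then show ?thesis using g x by blast
  qed
  then show ?thesis
    using g by auto
qed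

lemma conj_classes_subset_carrier: "C \<in> conj_classes G \<Longrightarrow> C \<subseteq> carrier G"
  unfolding conj_classes_def conj_class_def by blast

lemma conj_by_in_conj_class:
  assumes "C \<in> conj_classes G" and "x \<in> C" and "g \<in> carrier G"
  shows "conj_by G g x \<in> C"
proof -
  obtain y where y: "y \<in> carrier G" "C = conj_class G y"
    using assms(1) unfolding conj_classes_def by blast
  then obtain h where h: "h \<in> carrier G" "x = conj_by G h y"
    using assms(2) unfolding conj_class_def by blast
  have "conj_by G g x = conj_by G (g \<otimes> h) y"
    using h y assms(3) by (simp add: conj_by_mult)
  then show ?thesis using y h assms(3) unfolding conj_class_def by blast
qed

lemma tuple_prod_closed: "set xs \<subseteq> carrier G \<Longrightarrow> tuple_prod G xs \<in> carrier G"
  by (induction xs) (auto simp: tuple_prod_def)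

lemma tuple_prod_append:
  "set xs \<subseteq> carrier G \<Longrightarrow> set ys \<subseteq> carrier G \<Longrightarrow>
   tuple_prod G (xs @ ys) = tuple_prod G xs \<otimes> tuple_prod G ys"
  by (induction xs) (auto simp: tuple_prod_def m_assoc tuple_prod_closed[unfolded tuple_prod_def])

lemma tuple_prod_map_conj_by:
  assumes "g \<in> carrier G"
  shows "set xs \<subseteq> carrier G \<Longrightarrow> tuple_prod G (map (conj_by G g) xs) = conj_by G g (tuple_prod G xs)"
proof (induction xs)
  case Nil
  then show ?case using assms by (simp add: tuple_prod_def conj_by_def)
next
  case (Cons x xs)
  interpret conj: group_hom G G "conj_by G g"
    using group_hom_conj_by[OF assms] .
  show ?case
    using Cons tuple_prod_closed[of xs] by (simp add: tuple_prod_def)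
qed

lemma gen_tuples_subset_carrier:
  assumes "class_vector G Cs" and "xs \<in> gen_tuples G Cs"
  shows "set xs \<subseteq> carrier G"
proof
  fix x assume "x \<in> set xs"
  then obtain i where i: "i < length xs" "x = xs ! i"
    by (auto simp: in_set_conv_nth)
  have la: "list_all2 (\<lambda>x C. x \<in> C) xs Cs"
    using assms(2) unfolding gen_tuples_def by blast
  then have "x \<in> Cs ! i" and "Cs ! i \<in> set Cs"
    using i by (auto simp: list_all2_conv_all_nth)
  then show "x \<in> carrier G"
    using assms(1) conj_classes_subset_carrier unfolding class_vector_def by blast
qed

lemma finite_gen_tuples:
  assumes "finite (carrier G)" and "class_vector G Cs"
  shows "finite (gen_tuples G Cs)"
proof -
  have "gen_tuples G Cs \<subseteq> {xs. set xs \<subseteq> carrier G \<and> length xs = length Cs}"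
    using gen_tuples_subset_carrier[OF assms(2)] unfolding gen_tuples_def
    by (auto dest: list_all2_lengthD)
  then show ?thesis
    using finite_lists_length_eq[OF assms(1)] finite_subset by blast
qed

lemma map_conj_by_gen_tuples:
  assumes "class_vector G Cs" and xs: "xs \<in> gen_tuples G Cs" and g: "g \<in> carrier G"
  shows "map (conj_by G g) xs \<in> gen_tuples G Cs"
proof -
  interpret conj: group_hom G G "conj_by G g"
    using group_hom_conj_by[OF g] .
  have sub: "set xs \<subseteq> carrier G"
    using gen_tuples_subset_carrier[OF assms(1) xs] .
  have "list_all2 (\<lambda>x C. x \<in> C) (map (conj_by G g) xs) Cs"
    using xs assms(1) g unfolding gen_tuples_def class_vector_def
    by (auto simp: list_all2_conv_all_nth intro!: conj_by_in_conj_class)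
  moreover have "generate G (set (map (conj_by G g) xs)) = carrier G"
    using conj.generate_img[OF sub] xs conj_by_image_carrier[OF g]
    unfolding gen_tuples_def by simp
  moreover have "tuple_prod G (map (conj_by G g) xs) = \<one>"
    using xs tuple_prod_map_conj_by[OF g sub] g unfolding gen_tuples_def conj_by_def by simp
  ultimately show ?thesis
    unfolding gen_tuples_def by blast
qed

lemma append_gen_tuples:
  assumes "class_vector G Cs" "class_vector G Ds"
    and xs: "xs \<in> gen_tuples G Cs" and ys: "ys \<in> gen_tuples G Ds"
  shows "xs @ ys \<in> gen_tuples G (Cs @ Ds)"
proof -
  have sub: "set xs \<subseteq> carrier G" "set ys \<subseteq> carrier G"
    using gen_tuples_subset_carrier assms by blast+
  have "generate G (set xs) \<subseteq> generate G (set (xs @ ys))"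
    using sub by (intro mono_generate) auto
  then have "generate G (set (xs @ ys)) = carrier G"
    using xs sub generate_incl[of "set (xs @ ys)"] unfolding gen_tuples_def by auto
  then show ?thesis
    using xs ys tuple_prod_append[OF sub] unfolding gen_tuples_def
    by (auto intro: list_all2_appendI)
qed

lemma card_gen_tuples_mult_le:
  assumes "finite (carrier G)" and "class_vector G Cs" "class_vector G Ds"
  shows "card (gen_tuples G Cs) * card (gen_tuples G Ds) \<le> card (gen_tuples G (Cs @ Ds))"
proof -
  have "inj_on (\<lambda>(xs, ys). xs @ ys) (gen_tuples G Cs \<times> gen_tuples G Ds)"
    by (rule inj_onI) (auto simp: gen_tuples_def dest!: list_all2_lengthD)
  moreover have "(\<lambda>(xs, ys). xs @ ys) ` (gen_tuples G Cs \<times> gen_tuples G Ds) \<subseteq> gen_tuples G (Cs @ Ds)"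
    using append_gen_tuples assms by auto
  ultimately have "card (gen_tuples G Cs \<times> gen_tuples G Ds) \<le> card (gen_tuples G (Cs @ Ds))"
    using assms by (intro card_inj_on_le finite_gen_tuples) simp_all
  then show ?thesis
    by (simp add: card_cartesian_product)
qed

lemma fixing_generating_tuple_imp_center:
  assumes g: "g \<in> carrier G" and sub: "set xs \<subseteq> carrier G"
    and gen: "generate G (set xs) = carrier G" and fixed: "map (conj_by G g) xs = xs"
  shows "g \<in> group_center G"
proof -
  have "g \<otimes> x = x \<otimes> g" if "x \<in> set xs" for x
    using that g sub fixed conj_by_eq_iff_commute by (metis map_eq_conv list.map_id id_apply subsetD)
  then show ?thesis
    using commutes_with_generate[OF g sub] gen g unfolding group_center_def by auto
qed

lemma group_action_simultaneous_conj:
  assumes "class_vector G Cs"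
  shows "group_action G (gen_tuples G Cs) (\<lambda>g. \<lambda>xs \<in> gen_tuples G Cs. map (conj_by G g) xs)"
proof (rule group_actionI)
  show "map (conj_by G g) xs \<in> gen_tuples G Cs" if "g \<in> carrier G" "xs \<in> gen_tuples G Cs" for g xs
    using map_conj_by_gen_tuples assms that by blast
  show "map (conj_by G \<one>) xs = xs" if "xs \<in> gen_tuples G Cs" for xs
    using gen_tuples_subset_carrier[OF assms that] by (auto intro!: map_idI)
next
  fix g h xs assume "g \<in> carrier G" "h \<in> carrier G" and xs: "xs \<in> gen_tuples G Cs"
  then show "map (conj_by G (g \<otimes> h)) xs = map (conj_by G g) (map (conj_by G h) xs)"
    using gen_tuples_subset_carrier[OF assms xs] by (auto simp: conj_by_mult)
qed

lemma card_gen_tuples: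
  assumes fin: "finite (carrier G)" and center: "group_center G = {\<one>}"
    and cv: "class_vector G Cs"
  shows "card (gen_tuples G Cs) = order G * l_i G Cs"
proof -
  define E where "E = gen_tuples G Cs"
  define \<phi> where "\<phi> = (\<lambda>g. \<lambda>xs \<in> E. map (conj_by G g) xs)"
  interpret group_action G E \<phi>
    unfolding E_def \<phi>_def by (rule group_action_simultaneous_conj[OF cv])
  have orbit: "orbit G \<phi> xs = sim_conj_orbit G xs" if "xs \<in> E" for xs
    using that unfolding orbit_def sim_conj_orbit_def \<phi>_def by simp
  have "stabilizer G \<phi> xs = {\<one>}" if xs: "xs \<in> E" for xs
  proof -
    have "set xs \<subseteq> carrier G" and "generate G (set xs) = carrier G"
      using xs gen_tuples_subset_carrier[OF cv] unfolding E_def gen_tuples_def by auto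
    then have "stabilizer G \<phi> xs \<subseteq> group_center G"
      using xs fixing_generating_tuple_imp_center unfolding stabilizer_def \<phi>_def by auto
    then show ?thesis
      using center stabilizer_one_closed[OF xs] by blast
  qed
  then have card_orbit: "card (orbit G \<phi> xs) = order G" if "xs \<in> E" for xs
    using orbit_stabilizer_theorem[OF that] that by simp
  have "card E = (\<Sum>orb \<in> orbits G E \<phi>. card orb)"
    using disjoint_sum[of "\<lambda>_. 1 :: nat"] finite_gen_tuples[OF fin cv] unfolding E_def by simp
  also have "\<dots> = (\<Sum>orb \<in> orbits G E \<phi>. order G)"
    using card_orbit unfolding orbits_def by (intro sum.cong) auto
  also have "\<dots> = order G * card (orbits G E \<phi>)"
    by simp
  also have "orbits G E \<phi> = orbit G \<phi> ` E"
    unfolding orbits_def by blast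
  also have "\<dots> = Sigma_i G Cs"
    unfolding Sigma_i_def E_def using orbit[unfolded E_def] by (rule image_cong[OF refl])
  finally show ?thesis
    unfolding E_def l_i_def .
qed

end

lemma l_i_append_lower_bound:
  assumes "group G" and "finite (carrier G)" and "group_center G = {\<one>\<^bsub>G\<^esub>}"
    and "class_vector G (Cs @ Ds)"
  shows "order G * l_i G Cs * l_i G Ds \<le> l_i G (Cs @ Ds)"
proof -
  interpret group G by fact
  have "order G * l_i G Cs * (order G * l_i G Ds) \<le> order G * l_i G (Cs @ Ds)"
    using card_gen_tuples_mult_le card_gen_tuples assms(2-4) by (metis class_vector_append)
  moreover have "order G > 0"
    using assms(2) unfolding order_def by (auto simp: card_gt_0_iff)
  ultimately show ?thesis
    by (simp add: algebra_simps)
qed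

theorem proposition12:
  fixes G :: "('a, 'b) monoid_scheme" and Cs :: "'a set list" and n :: nat
  assumes "group G" and "finite (carrier G)"
    and "group_center G = {\<one>\<^bsub>G\<^esub>}"
    and "class_vector G Cs"
    and "length Cs \<ge> 6"
    and "3 \<le> n" and "n \<le> length Cs - 3"
  shows "l_i G Cs \<ge> order G * l_i G (take n Cs) * l_i G (drop n Cs)"
  using l_i_append_lower_bound[OF assms(1-3), of "take n Cs" "drop n Cs"] assms(4) by simp

end
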